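(* Let $\mathcal{X},\mathcal{Y}$ be Hilbert spaces, $F:\mathcal{D}(F)\subset\mathcal{X}\to\mathcal{Y}$ a (nonlinear) operator, $y\in\mathcal{Y}$ exact data and $y^\delta\in\mathcal{Y}$ noisy data with $\|y-y^\delta\|\le\delta$. Assume: (a) $\Theta:\mathcal{X}\to(-\infty,\infty]$ is proper, weakly lower semi-continuous and $p$-convex for some $p>1$, i.e. there is $c_0>0$ with $D_\xi\Theta(\bar x,x)\ge c_0\|x-\bar x\|^p$ for all $\bar x\in\mathcal{D}(\Theta)$, $x\in\mathcal{D}(\partial\Theta)$, $\xi\in\partial\Theta(x)$; (b) there are $\rho>0$, $x_0\in\mathcal{X}$ and $\xi_0\in\partial\Theta(x_0)$ with $B_{2\rho}(x_0)\subset\mathcal{D}(F)$, and $F(x)=y$ has a solution $x^*\in\mathcal{D}(\Theta)$ with $D_{\xi_0}\Theta(x^*,x_0)\le c_0\rho^p$; (c) $F$ is continuous and weakly closed on $\mathcal{D}(F)$; (d) there is a family of bounded linear operators $\{L(x):\mathcal{X}\to\mathcal{Y}\}_{x\in B_{2\rho}(x_0)\cap\mathcal{D}(\Theta)}$ such that $x\mapsto L(x)$ is continuous on $B_{2\rho}(x_0)\cap\mathcal{D}(\Theta)$, there is $0\le\eta<1$ with $\|F(x)-F(\bar x)-L(\bar x)(x-\bar x)\|<\eta\|F(x)-F(\bar x)\|$ for all $x,\bar x\in B_{2\rho}(x_0)\cap\mathcal{D}(\Theta)$, and there is $C_0>0$ with $\|L(x)\|\le C_0$ for all $x\in B_{2\rho}(x_0)$.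 Let $(\xi^\delta(t),x^\delta(t))$ be the solution of the initial value problem $$\frac{d\xi^\delta(t)}{dt}=-L(x^\delta(t))^*(F(x^\delta(t))-y^\delta),\quad x^\delta(t)=\nabla\Theta^*(\xi^\delta(t)),\qquad \xi^\delta(0)=\xi_0,\ x^\delta(0)=x_0,$$ for $T>0$. Then $x^\delta(T)$ and the residual $\|F(x^\delta(T))-y^\delta\|$ are continuous with respect to $T$.
   Context: For a convex $\Theta$, $\partial\Theta(x)=\{\xi:\Theta(\bar x)-\Theta(x)-\langle\xi,\bar x-x\rangle\ge0\ \forall\bar x\}$, $\mathcal{D}(\Theta)=\{x:\Theta(x)<\infty\}$, $\mathcal{D}(\partial\Theta)=\{x\in\mathcal{D}(\Theta):\partial\Theta(x)\neq\emptyset\}$, and the Bregman distance is $D_\xi\Theta(\bar x,x)=\Theta(\bar x)-\Theta(x)-\langle\xi,\bar x-x\rangle$ for $\xi\in\partial\Theta(x)$. $\Theta^*(\xi)=\sup_x\{\langle\xi,x\rangle-\Theta(x)\}$ is the Legendre–Fenchel conjugate, $\nabla\Theta^*$ its gradient, $L(x)^*$ the adjoint of $L(x)$, and $B_{2\rho}(x_0)$ the closed ball of radius $2\rho$ about $x_0$. *)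

theory Defs
  imports "HOL-Analysis.Analysis"
begin

definition weak_conv :: "(nat \<Rightarrow> 'a::real_inner) \<Rightarrow> 'a \<Rightarrow> bool" where
  "weak_conv xs x \<longleftrightarrow> (\<forall>z. ((\<lambda>n. xs n \<bullet> z) \<longlongrightarrow> x \<bullet> z) sequentially)"

definition dom_fun :: "('a \<Rightarrow> ereal) \<Rightarrow> 'a set" where
  "dom_fun \<Theta> = {x. \<Theta> x < \<infinity>}"

definition proper_fun :: "('a \<Rightarrow> ereal) \<Rightarrow> bool" where
  "proper_fun \<Theta> \<longleftrightarrow> (\<forall>x. \<Theta> x \<noteq> -\<infinity>) \<and> (\<exists>x. \<Theta> x < \<infinity>)"

definition ereal_convex :: "('a::real_vector \<Rightarrow> ereal) \<Rightarrow> bool" where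
  "ereal_convex \<Theta> \<longleftrightarrow> (\<forall>x y t. 0 \<le> t \<and> t \<le> 1 \<longrightarrow>
      \<Theta> (t *\<^sub>R x + (1 - t) *\<^sub>R y) \<le> ereal t * \<Theta> x + ereal (1 - t) * \<Theta> y)"

definition weakly_lsc :: "('a::real_inner \<Rightarrow> ereal) \<Rightarrow> bool" where
  "weakly_lsc \<Theta> \<longleftrightarrow> (\<forall>xs x. weak_conv xs x \<longrightarrow> \<Theta> x \<le> liminf (\<lambda>n. \<Theta> (xs n)))"

definition subdiff :: "('a::real_inner \<Rightarrow> ereal) \<Rightarrow> 'a \<Rightarrow> 'a set" where
  "subdiff \<Theta> x = {\<xi>. \<Theta> x < \<infinity> \<and> (\<forall>x'. \<Theta> x + ereal (\<xi> \<bullet> (x' - x)) \<le> \<Theta> x')}"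

definition dom_subdiff :: "('a::real_inner \<Rightarrow> ereal) \<Rightarrow> 'a set" where
  "dom_subdiff \<Theta> = {x \<in> dom_fun \<Theta>. subdiff \<Theta> x \<noteq> {}}"

text \<open>Bregman distance (used only for finite values).\<close>
definition bregman :: "('a::real_inner \<Rightarrow> ereal) \<Rightarrow> 'a \<Rightarrow> 'a \<Rightarrow> 'a \<Rightarrow> real" where
  "bregman \<Theta> \<xi> xb x = real_of_ereal (\<Theta> xb) - real_of_ereal (\<Theta> x) - \<xi> \<bullet> (xb - x)"

definition conjugate :: "('a::real_inner \<Rightarrow> ereal) \<Rightarrow> 'a \<Rightarrow> ereal" where
  "conjugate \<Theta> \<xi> = (SUP x. ereal (\<xi> \<bullet> x) - \<Theta> x)"

text \<open>\<open>x = \<nabla>\<Theta>\<^sup>*(\<xi>)\<close>: the conjugate is finite near \<open>\<xi>\<close> and Frechet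
  differentiable at \<open>\<xi>\<close> with gradient \<open>x\<close>.\<close>
definition is_grad_conj :: "('a::real_inner \<Rightarrow> ereal) \<Rightarrow> 'a \<Rightarrow> 'a \<Rightarrow> bool" where
  "is_grad_conj \<Theta> \<xi> x \<longleftrightarrow>
     (\<forall>\<^sub>F \<eta> in nhds \<xi>. \<bar>conjugate \<Theta> \<eta>\<bar> \<noteq> \<infinity>) \<and>
     ((\<lambda>\<eta>. real_of_ereal (conjugate \<Theta> \<eta>)) has_derivative (\<lambda>h. x \<bullet> h)) (at \<xi>)"

definition weakly_closed_on :: "'a::real_inner set \<Rightarrow> ('a \<Rightarrow> 'b::real_normed_vector) \<Rightarrow> bool" where
  "weakly_closed_on D F \<longleftrightarrow> (\<forall>xs x v. (\<forall>n. xs n \<in> D) \<and> weak_conv xs x \<and> (F \<circ> xs) \<longlonglongrightarrow> v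
        \<longrightarrow> x \<in> D \<and> F x = v)"

end

theory Submission
  imports Defs
begin

text \<open>The dual variable \<open>\<xi>\<close> solves an ODE and is therefore continuous, and
  \<open>x(t) = \<nabla>\<Theta>\<^sup>*(\<xi>(t))\<close>. The conjugate \<open>\<Theta>\<^sup>*\<close> is convex, and the gradient of a convex
  function is continuous on the set where it exists: the gradient inequality at \<open>b\<close> and the
  first-order expansion at \<open>a\<close> give \<open>\<langle>\<nabla>(b) - \<nabla>(a), y - b\<rangle> = o(\<parallel>y - a\<parallel>)\<close>, and taking
  \<open>y - b\<close> in the direction of \<open>\<nabla>(b) - \<nabla>(a)\<close> forces the two gradients to be close.
  Continuity of the residual then follows from continuity of \<open>F\<close>.\<close>

lemma ereal_convex_conjugate: "ereal_convex (conjugate \<Theta>)"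
  unfolding ereal_convex_def
proof (intro allI impI)
  fix a b :: 'a and t :: real
  assume t: "0 \<le> t \<and> t \<le> 1"
  let ?S = "\<lambda>\<xi> x. ereal (\<xi> \<bullet> x) - \<Theta> x"
  show "conjugate \<Theta> (t *\<^sub>R a + (1 - t) *\<^sub>R b) \<le> ereal t * conjugate \<Theta> a + ereal (1 - t) * conjugate \<Theta> b"
    unfolding conjugate_def
  proof (rule SUP_least)
    fix z
    show "?S (t *\<^sub>R a + (1 - t) *\<^sub>R b) z \<le> ereal t * (SUP x. ?S a x) + ereal (1 - t) * (SUP x. ?S b x)"
    proof (cases "\<Theta> z")
      case (real r)
      have "?S (t *\<^sub>R a + (1 - t) *\<^sub>R b) z = ereal t * ?S a z + ereal (1 - t) * ?S b z"
        using real by (simp add: inner_add_left algebra_simps)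
      also have "\<dots> \<le> ereal t * (SUP x. ?S a x) + ereal (1 - t) * (SUP x. ?S b x)"
        using t by (intro add_mono ereal_mult_left_mono SUP_upper) auto
      finally show ?thesis .
    next
      case MInf
      then have "(SUP x. ?S a x) = \<infinity>" "(SUP x. ?S b x) = \<infinity>"
        using SUP_upper[of z UNIV "?S a"] SUP_upper[of z UNIV "?S b"] by auto
      then show ?thesis
        using t by (cases "t = 0") auto
    qed simp
  qed
qed

lemma conjugate_neq_MInf:
  assumes "proper_fun \<Theta>"
  shows "conjugate \<Theta> \<xi> \<noteq> -\<infinity>"
proof -
  obtain z where "\<Theta> z < \<infinity>" "\<Theta> z \<noteq> -\<infinity>"
    using assms unfolding proper_fun_def by blast
  then have "-\<infinity> < ereal (\<xi> \<bullet> z) - \<Theta> z"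
    by (cases "\<Theta> z") auto
  also have "\<dots> \<le> conjugate \<Theta> \<xi>"
    unfolding conjugate_def by (rule SUP_upper) simp
  finally show ?thesis by simp
qed

lemma ereal_convexD:
  assumes "ereal_convex f" and "0 \<le> u" "0 \<le> v" "u + v = 1"
  shows "f (u *\<^sub>R x + v *\<^sub>R y) \<le> ereal u * f x + ereal v * f y"
proof -
  have "v = 1 - u"
    using assms(4) by simp
  then show ?thesis
    using assms(1-3) unfolding ereal_convex_def by auto
qed

lemma convex_dom_fun:
  assumes "ereal_convex f"
  shows "convex (dom_fun f)"
proof (rule convexI)
  fix x y :: 'a and u v :: real
  assume xy: "x \<in> dom_fun f" "y \<in> dom_fun f" and uv: "0 \<le> u" "0 \<le> v" "u + v = 1"
  have "f (u *\<^sub>R x + v *\<^sub>R y) \<le> ereal u * f x + ereal v * f y"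
    using assms uv by (rule ereal_convexD)
  also have "\<dots> < \<infinity>"
    using xy uv unfolding dom_fun_def by (simp add: ereal_mult_less_right)
  finally show "u *\<^sub>R x + v *\<^sub>R y \<in> dom_fun f"
    unfolding dom_fun_def by simp
qed

lemma convex_on_real_of_ereal:
  assumes "ereal_convex f" and "\<And>x. f x \<noteq> -\<infinity>"
  shows "convex_on (dom_fun f) (\<lambda>x. real_of_ereal (f x))"
  unfolding convex_on_def
proof (intro conjI ballI allI impI)
  show "convex (dom_fun f)"
    using assms(1) by (rule convex_dom_fun)
next
  fix x y :: 'a and u v :: real
  assume xy: "x \<in> dom_fun f" "y \<in> dom_fun f" and uv: "0 \<le> u" "0 \<le> v" "u + v = 1"
  have "u *\<^sub>R x + v *\<^sub>R y \<in> dom_fun f"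
    using convexD[OF convex_dom_fun[OF assms(1)] xy uv] .
  moreover have "\<exists>r. f z = ereal r" if "z \<in> dom_fun f" for z
    using that assms(2)[of z] unfolding dom_fun_def by (cases "f z") auto
  ultimately obtain X Y Z where "f x = ereal X" "f y = ereal Y" "f (u *\<^sub>R x + v *\<^sub>R y) = ereal Z"
    using xy by metis
  moreover have "f (u *\<^sub>R x + v *\<^sub>R y) \<le> ereal u * f x + ereal v * f y"
    using assms(1) uv by (rule ereal_convexD)
  ultimately show "real_of_ereal (f (u *\<^sub>R x + v *\<^sub>R y)) \<le> u * real_of_ereal (f x) + v * real_of_ereal (f y)"
    by simp
qed

lemma convex_on_gradient_inequality:
  fixes \<phi> :: "'a::real_inner \<Rightarrow> real"
  assumes "convex_on S \<phi>" "a \<in> S" "b \<in> S"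
    and "(\<phi> has_derivative (\<lambda>h. g \<bullet> h)) (at a)"
  shows "\<phi> a + g \<bullet> (b - a) \<le> \<phi> b"
proof -
  define \<psi> where "\<psi> s = \<phi> (a + s *\<^sub>R (b - a))" for s :: real
  have "(\<psi> has_derivative (\<lambda>s. g \<bullet> (s *\<^sub>R (b - a)))) (at_right 0)"
    unfolding \<psi>_def
    by (rule has_derivative_in_compose[where f = "\<lambda>s. a + s *\<^sub>R (b - a)"])
      (auto intro!: derivative_eq_intros has_derivative_at_withinI[OF assms(4)])
  then have "(\<psi> has_field_derivative g \<bullet> (b - a)) (at_right 0)"
    by (simp add: has_field_derivative_def mult_commute_abs)
  then have "((\<lambda>s. (\<psi> s - \<psi> 0) / s) \<longlongrightarrow> g \<bullet> (b - a)) (at_right 0)"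
    by (simp add: has_field_derivative_iff)
  moreover have "\<forall>\<^sub>F s in at_right 0. s \<in> {0<..<1::real}"
    by (rule eventually_at_right_real) simp
  then have "\<forall>\<^sub>F s in at_right 0. (\<psi> s - \<psi> 0) / s \<le> \<phi> b - \<phi> a"
  proof eventually_elim
    case (elim s)
    have "\<psi> s = \<phi> ((1 - s) *\<^sub>R a + s *\<^sub>R b)"
      unfolding \<psi>_def by (simp add: algebra_simps)
    also have "\<dots> \<le> (1 - s) * \<phi> a + s * \<phi> b"
      using elim assms(1-3) by (intro convex_onD) auto
    finally have "\<psi> s - \<psi> 0 \<le> (\<phi> b - \<phi> a) * s"
      by (simp add: \<psi>_def algebra_simps)
    then show ?case
      using elim by (simp add: pos_divide_le_eq)
  qed
  ultimately have "g \<bullet> (b - a) \<le> \<phi> b - \<phi> a"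
    by (rule tendsto_upperbound) simp
  then show ?thesis by simp
qed

lemma convex_on_gradient_continuous:
  fixes \<phi> :: "'a::real_inner \<Rightarrow> real" and G :: "'a \<Rightarrow> 'a"
  assumes convex: "convex_on S \<phi>" and "open S" "U \<subseteq> S"
    and grad: "\<And>b. b \<in> U \<Longrightarrow> (\<phi> has_derivative (\<lambda>h. G b \<bullet> h)) (at b)"
  shows "continuous_on U G"
  unfolding continuous_on_iff
proof (intro ballI allI impI)
  fix a and e :: real
  assume a: "a \<in> U" and e: "0 < e"
  obtain r where r: "r > 0" "ball a r \<subseteq> S"
    using \<open>open S\<close> \<open>U \<subseteq> S\<close> a open_contains_ball by blast
  obtain r' where r': "r' > 0"
    "\<And>y. norm (y - a) < r' \<Longrightarrow> norm (\<phi> y - \<phi> a - G a \<bullet> (y - a)) \<le> e / 4 * norm (y - a)"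
    using grad[OF a] e unfolding has_derivative_at_alt by (meson zero_less_divide_iff zero_less_numeral)
  define t where "t = min r r' / 2"
  show "\<exists>d>0. \<forall>b\<in>U. dist b a < d \<longrightarrow> dist (G b) (G a) < e"
  proof (intro exI[of _ t] conjI ballI impI)
    show "t > 0"
      using r r' by (simp add: t_def)
    fix b
    assume b: "b \<in> U" "dist b a < t"
    define N where "N = norm (G b - G a)"
    define y where "y = b + (t / N) *\<^sub>R (G b - G a)"
      \<comment> \<open>\<open>t / 0 = 0\<close>: for \<open>N = 0\<close> this is \<open>y = b\<close>, which still satisfies the estimates below\<close>
    have "norm (y - b) \<le> t"
      using \<open>t > 0\<close> by (cases "N = 0") (simp_all add: y_def N_def)
    then have "norm (y - a) < 2 * t"
      using b(2) norm_triangle_ineq[of "y - b" "b - a"] by (simp add: dist_norm)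
    then have ya: "norm (y - a) < r" "norm (y - a) < r'"
      unfolding t_def by linarith+
    then have "y \<in> S"
      using r(2) by (auto simp: dist_norm norm_minus_commute)
    have "a \<in> S" "b \<in> S"
      using a b(1) \<open>U \<subseteq> S\<close> by auto
    have "t * N = (G b - G a) \<bullet> (y - b)"
      by (cases "N = 0") (simp_all add: y_def N_def power2_norm_eq_inner[symmetric] power2_eq_square)
    also have "\<dots> \<le> \<phi> y - \<phi> a - G a \<bullet> (y - a)"
      using convex_on_gradient_inequality[OF convex \<open>b \<in> S\<close> \<open>y \<in> S\<close> grad[OF b(1)]]
        convex_on_gradient_inequality[OF convex \<open>a \<in> S\<close> \<open>b \<in> S\<close> grad[OF a]]
      by (simp add: inner_diff_left inner_diff_right)
    also have "\<dots> \<le> e / 4 * norm (y - a)"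
      using r'(2)[OF ya(2)] unfolding real_norm_def by (rule abs_le_D1)
    also have "\<dots> \<le> e / 2 * t"
      using \<open>norm (y - a) < 2 * t\<close> e by simp
    finally have "t * N \<le> t * (e / 2)"
      by (simp add: mult.commute)
    then show "dist (G b) (G a) < e"
      using \<open>t > 0\<close> e by (simp add: N_def dist_norm)
  qed
qed

lemma is_grad_conj_in_interior:
  assumes "is_grad_conj \<Theta> \<xi> x"
  shows "\<xi> \<in> interior (dom_fun (conjugate \<Theta>))"
proof -
  obtain S where "open S" "\<xi> \<in> S" "\<forall>\<eta>\<in>S. \<bar>conjugate \<Theta> \<eta>\<bar> \<noteq> \<infinity>"
    using assms unfolding is_grad_conj_def eventually_nhds by blast
  moreover have "c < \<infinity>" if "\<bar>c\<bar> \<noteq> \<infinity>" for c :: ereal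
    using that by (cases c) auto
  ultimately show ?thesis
    by (intro interiorI[of S]) (auto simp: dom_fun_def)
qed

lemma is_grad_conj_unique:
  assumes "is_grad_conj \<Theta> \<xi> x" "is_grad_conj \<Theta> \<xi> x'"
  shows "x = x'"
proof -
  have "(\<lambda>h. x \<bullet> h) = (\<lambda>h. x' \<bullet> h)"
    using assms unfolding is_grad_conj_def by (blast intro: has_derivative_unique)
  then show ?thesis
    by (metis vector_eq_rdot)
qed

theorem lemma3p1:
  fixes \<Theta> :: "'a::{real_inner,complete_space} \<Rightarrow> ereal"
    and F :: "'a \<Rightarrow> 'b::{real_inner,complete_space}"
    and DF :: "'a set"
    and L :: "'a \<Rightarrow> ('a \<Rightarrow>\<^sub>L 'b)"
    and y y\<delta> :: 'b
    and \<delta> p c0 \<rho> \<eta> C0 :: real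
    and x0 \<xi>0 xstar :: 'a
    and \<xi> x :: "real \<Rightarrow> 'a"
  assumes data: "norm (y - y\<delta>) \<le> \<delta>"
    and proper: "proper_fun \<Theta>"
    and convex: "ereal_convex \<Theta>"
    and wlsc: "weakly_lsc \<Theta>"
    and p_gt: "p > 1"
    and c0_pos: "c0 > 0"
    and p_convex: "\<forall>xb \<in> dom_fun \<Theta>. \<forall>xx \<in> dom_subdiff \<Theta>. \<forall>\<zeta> \<in> subdiff \<Theta> xx.
                      bregman \<Theta> \<zeta> xb xx \<ge> c0 * norm (xx - xb) powr p"
    and rho_pos: "\<rho> > 0"
    and xi0: "\<xi>0 \<in> subdiff \<Theta> x0"
    and ball_sub: "cball x0 (2 * \<rho>) \<subseteq> DF"
    and xstar_D: "xstar \<in> DF" and xstar_dom: "xstar \<in> dom_fun \<Theta>"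
    and xstar_sol: "F xstar = y"
    and xstar_breg: "bregman \<Theta> \<xi>0 xstar x0 \<le> c0 * \<rho> powr p"
    and F_cont: "continuous_on DF F"
    and F_wclosed: "weakly_closed_on DF F"
    and L_cont: "continuous_on (cball x0 (2 * \<rho>) \<inter> dom_fun \<Theta>) L"
    and eta: "0 \<le> \<eta>" "\<eta> < 1"
    and tcc: "\<forall>xa \<in> cball x0 (2 * \<rho>) \<inter> dom_fun \<Theta>. \<forall>xb \<in> cball x0 (2 * \<rho>) \<inter> dom_fun \<Theta>.
                 norm (F xa - F xb - blinfun_apply (L xb) (xa - xb)) \<le> \<eta> * norm (F xa - F xb)"
    and C0_pos: "C0 > 0"
    and L_bound: "\<forall>xa \<in> cball x0 (2 * \<rho>) \<inter> dom_fun \<Theta>. norm (L xa) \<le> C0"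
    and sol_in: "\<forall>t \<ge> 0. x t \<in> cball x0 (2 * \<rho>)"
    and ode: "\<forall>t \<ge> 0. (\<xi> has_vector_derivative
                  (- adjoint (blinfun_apply (L (x t))) (F (x t) - y\<delta>))) (at t within {0..})"
    and grad: "\<forall>t \<ge> 0. is_grad_conj \<Theta> (\<xi> t) (x t)"
    and init: "\<xi> 0 = \<xi>0" "x 0 = x0"
  shows "continuous_on {0<..} x \<and> continuous_on {0<..} (\<lambda>T. norm (F (x T) - y\<delta>))"
proof -
  define S where "S = interior (dom_fun (conjugate \<Theta>))"
  define G where "G \<eta> = (THE g. is_grad_conj \<Theta> \<eta> g)" for \<eta>
  have x_eq: "x t = G (\<xi> t)" if "t \<ge> 0" for t
    unfolding G_def using grad that by (metis is_grad_conj_unique the_equality)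
  have "convex_on S (\<lambda>\<eta>. real_of_ereal (conjugate \<Theta> \<eta>))"
    unfolding S_def using convex_dom_fun[OF ereal_convex_conjugate]
    by (intro convex_on_subset[OF convex_on_real_of_ereal] ereal_convex_conjugate
        conjugate_neq_MInf proper interior_subset convex_interior)
  moreover have "\<xi> ` {0..} \<subseteq> S"
    using grad is_grad_conj_in_interior unfolding S_def by auto
  moreover have "((\<lambda>\<eta>. real_of_ereal (conjugate \<Theta> \<eta>)) has_derivative (\<lambda>h. G \<eta> \<bullet> h)) (at \<eta>)"
    if "\<eta> \<in> \<xi> ` {0..}" for \<eta>
    using that grad x_eq unfolding is_grad_conj_def by auto
  ultimately have "continuous_on (\<xi> ` {0..}) G"
    using open_interior S_def by (intro convex_on_gradient_continuous) auto
  moreover have "continuous_on {0..} \<xi>"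
    using ode by (intro continuous_on_vector_derivative) auto
  ultimately have "continuous_on {0..} (\<lambda>t. G (\<xi> t))"
    by (rule continuous_on_compose2) auto
  then have "continuous_on {0<..} (\<lambda>t. G (\<xi> t))"
    by (rule continuous_on_subset) auto
  then have x_cont: "continuous_on {0<..} x"
    by (rule continuous_on_eq) (auto simp: x_eq)
  have "continuous_on {0<..} (\<lambda>T. F (x T))"
    by (rule continuous_on_compose2[OF F_cont x_cont]) (use sol_in ball_sub in auto)
  then have "continuous_on {0<..} (\<lambda>T. norm (F (x T) - y\<delta>))"
    by (intro continuous_intros)
  with x_cont show ?thesis ..
qed

end
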